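(* A mechanism $\varphi$ is strategyproof if and only if it is separation monotonic, separation upper invariant, and separation lower invariant.
   Context: Let $M$ be a finite set of $m$ alternatives. A preference order is a weak order $R$ on $M$ (with strict part $P$ and indifference $I$), represented as $M_1 ~P~ \ldots ~P~ M_K$, where $(M_k)_{1\le k\le K}$ is a partition of $M$ such that the agent is indifferent between any two alternatives in the same $M_k$ and strictly prefers every alternative of $M_k$ to every alternative of $M_{k+1}$. Let $\mathcal{R}$ be the set of all preference orders. A mechanism is a map $\varphi:\mathcal{R}\to\Delta(M)$ (lotteries over $M$); for $A\subseteq M$ write $\varphi_A(R)=\sum_{a\in A}\varphi_a(R)$. A lottery $x$ first order-stochastically dominates $y$ at $R$ if $\sum_{j: j R a} x_j \ge \sum_{j: j R a} y_j$ for all $a\in M$. $\varphi$ is strategyproof if for all $(R,R')\in\mathcal{R}^2$, $\varphi(R)$ first order-stochastically dominates $\varphi(R')$ at $R$. A separation is a pair $(R,R')$ such that, for some $\kappa\in\{1,\ldots,K\}$, $R$ is $M_1 P \ldots P M_\kappa P \ldots P M_K$ and $R'$ is $M_1 P' \ldots P' M_{\kappa-1} P' M^1_\kappa P' M^2_\kappa P' M_{\kappa+1} P' \ldots P' M_K$, where $M^1_\kappa \dot\cup M^2_\kappa = M_\kappa$ is a disjoint partition. The axioms: $\varphi$ is separation responsive if for all separations $\varphi_{M^1_\kappa}(R')\ge\varphi_{M^1_\kappa}(R)$ and $\varphi_{M^2_\kappa}(R')\le\varphi_{M^2_\kappa}(R)$; separation direct if for all separations with $\varphi_{M_k}(R)\ne\varphi_{M_k}(R')$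 for some $k$, we have $\varphi_{M^1_\kappa}(R')\ne\varphi_{M^1_\kappa}(R)$ and $\varphi_{M^2_\kappa}(R')\ne\varphi_{M^2_\kappa}(R)$; separation monotonic if both separation responsive and separation direct; separation upper invariant if for all separations $\varphi_{M_k}(R)=\varphi_{M_k}(R')$ for all $k\in\{1,\ldots,\kappa-1\}$; separation lower invariant if for all separations $\varphi_{M_k}(R)=\varphi_{M_k}(R')$ for all $k\in\{\kappa+1,\ldots,K\}$. *)

theory Defs
  imports Complex_Main
begin

text \<open>Alternatives: a finite type 'a, so the set of alternatives M is UNIV.
  A preference order is a weak order (reflexive, transitive, total relation) on M.\<close>

definition pref_order :: "('a \<times> 'a) set \<Rightarrow> bool" where
  "pref_order R \<longleftrightarrow> refl R \<and> trans R \<and> total R"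

text \<open>Ms is the block representation M_1 P ... P M_K of R (0-indexed list):
  an ordered partition of M into nonempty blocks, with a R b iff the block of a
  is not after the block of b.\<close>

definition represents :: "('a \<times> 'a) set \<Rightarrow> 'a set list \<Rightarrow> bool" where
  "represents R Ms \<longleftrightarrow>
     (\<forall>X\<in>set Ms. X \<noteq> {}) \<and>
     (\<forall>i<length Ms. \<forall>j<length Ms. i \<noteq> j \<longrightarrow> Ms ! i \<inter> Ms ! j = {}) \<and>
     \<Union>(set Ms) = UNIV \<and>
     (\<forall>a b. (a, b) \<in> R \<longleftrightarrow>
        (\<exists>i<length Ms. \<exists>j<length Ms. i \<le> j \<and> a \<in> Ms ! i \<and> b \<in> Ms ! j))"

definition lottery :: "('a::finite \<Rightarrow> real) \<Rightarrow> bool" where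
  "lottery x \<longleftrightarrow> (\<forall>a. 0 \<le> x a) \<and> (\<Sum>a\<in>UNIV. x a) = 1"

definition mechanism :: "(('a::finite \<times> 'a) set \<Rightarrow> 'a \<Rightarrow> real) \<Rightarrow> bool" where
  "mechanism \<phi> \<longleftrightarrow> (\<forall>R. pref_order R \<longrightarrow> lottery (\<phi> R))"

definition setprob :: "('a \<Rightarrow> real) \<Rightarrow> 'a set \<Rightarrow> real" where
  "setprob x A = (\<Sum>a\<in>A. x a)"

definition fosd :: "('a::finite \<times> 'a) set \<Rightarrow> ('a \<Rightarrow> real) \<Rightarrow> ('a \<Rightarrow> real) \<Rightarrow> bool" where
  "fosd R x y \<longleftrightarrow> (\<forall>a. setprob x {j. (j, a) \<in> R} \<ge> setprob y {j. (j, a) \<in> R})"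

definition strategyproof :: "(('a::finite \<times> 'a) set \<Rightarrow> 'a \<Rightarrow> real) \<Rightarrow> bool" where
  "strategyproof \<phi> \<longleftrightarrow>
     (\<forall>R R'. pref_order R \<and> pref_order R' \<longrightarrow> fosd R (\<phi> R) (\<phi> R'))"

text \<open>(R, R') is a separation with data Ms (blocks of R), k (0-indexed position of
  the split block M_kappa), and the split M_kappa = A \<union> B (A = M^1, B = M^2).\<close>

definition separation ::
  "('a \<times> 'a) set \<Rightarrow> ('a \<times> 'a) set \<Rightarrow> 'a set list \<Rightarrow> nat \<Rightarrow> 'a set \<Rightarrow> 'a set \<Rightarrow> bool" where
  "separation R R' Ms k A B \<longleftrightarrow>
     pref_order R \<and> pref_order R' \<and>
     represents R Ms \<and> k < length Ms \<and>
     A \<union> B = Ms ! k \<and> A \<inter> B = {} \<and> A \<noteq> {} \<and> B \<noteq> {} \<and>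
     represents R' (take k Ms @ [A, B] @ drop (Suc k) Ms)"

definition sep_responsive :: "(('a::finite \<times> 'a) set \<Rightarrow> 'a \<Rightarrow> real) \<Rightarrow> bool" where
  "sep_responsive \<phi> \<longleftrightarrow>
     (\<forall>R R' Ms k A B. separation R R' Ms k A B \<longrightarrow>
        setprob (\<phi> R') A \<ge> setprob (\<phi> R) A \<and> setprob (\<phi> R') B \<le> setprob (\<phi> R) B)"

definition sep_direct :: "(('a::finite \<times> 'a) set \<Rightarrow> 'a \<Rightarrow> real) \<Rightarrow> bool" where
  "sep_direct \<phi> \<longleftrightarrow>
     (\<forall>R R' Ms k A B. separation R R' Ms k A B \<longrightarrow>
        (\<exists>i<length Ms. setprob (\<phi> R) (Ms ! i) \<noteq> setprob (\<phi> R') (Ms ! i)) \<longrightarrow>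
        setprob (\<phi> R') A \<noteq> setprob (\<phi> R) A \<and> setprob (\<phi> R') B \<noteq> setprob (\<phi> R) B)"

definition sep_monotonic :: "(('a::finite \<times> 'a) set \<Rightarrow> 'a \<Rightarrow> real) \<Rightarrow> bool" where
  "sep_monotonic \<phi> \<longleftrightarrow> sep_responsive \<phi> \<and> sep_direct \<phi>"

definition sep_upper_invariant :: "(('a::finite \<times> 'a) set \<Rightarrow> 'a \<Rightarrow> real) \<Rightarrow> bool" where
  "sep_upper_invariant \<phi> \<longleftrightarrow>
     (\<forall>R R' Ms k A B. separation R R' Ms k A B \<longrightarrow>
        (\<forall>i<k. setprob (\<phi> R) (Ms ! i) = setprob (\<phi> R') (Ms ! i)))"

definition sep_lower_invariant :: "(('a::finite \<times> 'a) set \<Rightarrow> 'a \<Rightarrow> real) \<Rightarrow> bool" where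
  "sep_lower_invariant \<phi> \<longleftrightarrow>
     (\<forall>R R' Ms k A B. separation R R' Ms k A B \<longrightarrow>
        (\<forall>i. k < i \<and> i < length Ms \<longrightarrow> setprob (\<phi> R) (Ms ! i) = setprob (\<phi> R') (Ms ! i)))"

end

theory Submission
  imports Defs
begin

(* Necessity: in a separation, every union of an initial segment of the blocks of R is an upper
   contour set of both R and R', so strategyproofness applied in both directions fixes its
   probability. Hence no block changes its probability, and the upper contour set of R' that
   ends with M^1 gives responsiveness; directness then holds vacuously.

   Sufficiency: let top_prob V be the probability of V when the agent reports V over its
   complement. Splitting a block changes neither the probability of the other blocks (upper
   and lower invariance) nor, since lotteries sum to 1, of the split block; so every report
   gives each of its upper contour sets U the probability top_prob U. Responsiveness makes
   top_prob submodular, and telescoping over the blocks of an arbitrary report R' bounds the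
   probability of any set V under R' by top_prob V. *)

section \<open>Weak orders as ordered partitions\<close>

definition ordered_partition :: "'a set list \<Rightarrow> bool" where
  "ordered_partition Ms \<longleftrightarrow> {} \<notin> set Ms \<and> sorted_wrt disjnt Ms \<and> \<Union>(set Ms) = UNIV"

definition weak_order_of :: "'a set list \<Rightarrow> ('a \<times> 'a) set" where
  "weak_order_of Ms = {(a, b). \<exists>i<length Ms. \<exists>j<length Ms. i \<le> j \<and> a \<in> Ms ! i \<and> b \<in> Ms ! j}"

lemma in_weak_order_of_iff:
  "(a, b) \<in> weak_order_of Ms \<longleftrightarrow> (\<exists>i<length Ms. \<exists>j<length Ms. i \<le> j \<and> a \<in> Ms ! i \<and> b \<in> Ms ! j)"
  by (simp add: weak_order_of_def)

lemma sorted_wrt_disjnt_nth: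
  assumes "sorted_wrt disjnt Ms" "i < length Ms" "j < length Ms" "i \<noteq> j"
  shows "Ms ! i \<inter> Ms ! j = {}"
  using assms sorted_wrt_nth_less[OF assms(1), of i j] sorted_wrt_nth_less[OF assms(1), of j i]
  by (cases "i < j") (auto simp: disjnt_def)

lemma ordered_partition_nth_unique:
  "ordered_partition Ms \<Longrightarrow> i < length Ms \<Longrightarrow> j < length Ms \<Longrightarrow> a \<in> Ms ! i \<Longrightarrow> a \<in> Ms ! j \<Longrightarrow> i = j"
  unfolding ordered_partition_def using sorted_wrt_disjnt_nth by blast

lemma ordered_partition_cover:
  assumes "ordered_partition Ms"
  obtains i where "i < length Ms" "a \<in> Ms ! i"
proof -
  have "a \<in> \<Union>(set Ms)" using assms by (simp add: ordered_partition_def)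
  then show ?thesis using that by (auto simp: in_set_conv_nth)
qed

lemma ordered_partition_pair_iff: "ordered_partition [U, W] \<longleftrightarrow> U \<noteq> {} \<and> W \<noteq> {} \<and> W = - U"
  by (auto simp: ordered_partition_def disjnt_def)

lemma filter_nonempty_pair:
  "ordered_partition [U, W] \<Longrightarrow> filter (\<lambda>X. X \<noteq> {}) [U, - U] = [U, W]"
  unfolding ordered_partition_pair_iff by (elim conjE) (hypsubst, simp)

lemma ordered_partition_three_blocks:
  assumes "S \<inter> X = {}" "S \<inter> Z = {}" "X \<inter> Z = {}" "X \<noteq> {}" "Z \<noteq> {}"
  shows "ordered_partition (filter (\<lambda>Y. Y \<noteq> {}) [S] @ [X, Z] @ filter (\<lambda>Y. Y \<noteq> {}) [- (S \<union> X \<union> Z)])"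
  using assms by (auto simp: ordered_partition_def disjnt_def)

lemma represents_iff: "represents R Ms \<longleftrightarrow> ordered_partition Ms \<and> R = weak_order_of Ms"
proof -
  have "sorted_wrt disjnt Ms \<longleftrightarrow>
      (\<forall>i<length Ms. \<forall>j<length Ms. i \<noteq> j \<longrightarrow> Ms ! i \<inter> Ms ! j = {})"
  proof
    assume "sorted_wrt disjnt Ms"
    then show "\<forall>i<length Ms. \<forall>j<length Ms. i \<noteq> j \<longrightarrow> Ms ! i \<inter> Ms ! j = {}"
      using sorted_wrt_disjnt_nth by blast
  qed (auto simp: sorted_wrt_iff_nth_less disjnt_def)
  moreover have "(\<forall>X\<in>set Ms. X \<noteq> {}) \<longleftrightarrow> {} \<notin> set Ms" by blast
  moreover have "R = weak_order_of Ms \<longleftrightarrow> (\<forall>a b. (a, b) \<in> R \<longleftrightarrow>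
      (\<exists>i<length Ms. \<exists>j<length Ms. i \<le> j \<and> a \<in> Ms ! i \<and> b \<in> Ms ! j))"
    unfolding set_eq_iff split_paired_All in_weak_order_of_iff ..
  ultimately show ?thesis
    unfolding represents_def ordered_partition_def by (simp only: conj_ac)
qed

lemma pref_order_weak_order_of:
  assumes part: "ordered_partition Ms"
  shows "pref_order (weak_order_of Ms)"
proof -
  have "refl (weak_order_of Ms)"
    unfolding refl_on_def in_weak_order_of_iff by (metis UNIV_I ordered_partition_cover[OF part] order_refl)
  moreover have "trans (weak_order_of Ms)"
    unfolding trans_def in_weak_order_of_iff
    by (metis ordered_partition_nth_unique[OF part] order_trans)
  moreover have "total (weak_order_of Ms)"
    unfolding total_on_def in_weak_order_of_iff
    by (metis ordered_partition_cover[OF part] nat_le_linear)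
  ultimately show ?thesis by (simp add: pref_order_def)
qed

lemma Union_set_take_iff:
  "a \<in> \<Union>(set (take n Ms)) \<longleftrightarrow> (\<exists>l<n. l < length Ms \<and> a \<in> Ms ! l)"
proof
  assume "a \<in> \<Union>(set (take n Ms))"
  then show "\<exists>l<n. l < length Ms \<and> a \<in> Ms ! l"
    by (auto simp: in_set_conv_nth) blast
next
  assume "\<exists>l<n. l < length Ms \<and> a \<in> Ms ! l"
  then obtain l where "l < n" "l < length Ms" "a \<in> Ms ! l" by blast
  then show "a \<in> \<Union>(set (take n Ms))"
    using nth_mem[of l "take n Ms"] by auto
qed

lemma upper_contour_weak_order_of:
  assumes part: "ordered_partition Ms" and "i < length Ms" "a \<in> Ms ! i"
  shows "{b. (b, a) \<in> weak_order_of Ms} = \<Union>(set (take (Suc i) Ms))"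
  unfolding set_eq_iff mem_Collect_eq Union_set_take_iff in_weak_order_of_iff less_Suc_eq_le
  using assms ordered_partition_nth_unique[OF part] by (metis le_less_trans)

lemma prefix_Union_upper_contour:
  assumes part: "ordered_partition Ms" and "0 < n" "n \<le> length Ms"
  obtains a where "{b. (b, a) \<in> weak_order_of Ms} = \<Union>(set (take n Ms))"
proof -
  have last: "n - 1 < length Ms" and n: "Suc (n - 1) = n" using assms by simp_all
  then have "Ms ! (n - 1) \<noteq> {}" using part nth_mem unfolding ordered_partition_def by metis
  then obtain a where "a \<in> Ms ! (n - 1)" by blast
  from upper_contour_weak_order_of[OF part last this] show ?thesis
    unfolding n by (rule that)
qed

definition level_sets :: "('a::finite \<Rightarrow> 'b::linorder) \<Rightarrow> 'a set list" where
  "level_sets f = map (\<lambda>v. f -` {v}) (sorted_list_of_set (range f))"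

lemma ordered_partition_level_sets: "ordered_partition (level_sets f)"
proof -
  have "sorted_wrt (\<lambda>v w. disjnt (f -` {v}) (f -` {w})) (sorted_list_of_set (range f))"
    by (rule sorted_wrt_mono_rel[OF _ sorted_list_of_set.strict_sorted_key_list_of_set])
      (auto simp: disjnt_def)
  then show ?thesis
    by (auto simp: ordered_partition_def level_sets_def sorted_wrt_map)
qed

lemma weak_order_of_level_sets: "weak_order_of (level_sets f) = {(a, b). f a \<le> f b}"
proof -
  define vs where "vs = sorted_list_of_set (range f)"
  have strict: "sorted_wrt (<) vs" and set_vs: "set vs = range f"
    by (simp_all add: vs_def)
  have length: "length (level_sets f) = length vs"
    by (simp add: level_sets_def vs_def)
  have member: "a \<in> level_sets f ! i \<longleftrightarrow> f a = vs ! i" if "i < length vs" for a i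
    using that by (simp add: level_sets_def vs_def)
  have index_le: "i \<le> j \<longleftrightarrow> vs ! i \<le> vs ! j" if "i < length vs" "j < length vs" for i j
  proof
    show "i \<le> j \<Longrightarrow> vs ! i \<le> vs ! j"
      using that strict_sorted_imp_sorted[OF strict] by (simp add: sorted_nth_mono)
    show "vs ! i \<le> vs ! j \<Longrightarrow> i \<le> j"
      using that sorted_wrt_nth_less[OF strict, of j i] by (meson leD not_le)
  qed
  have index: "(\<exists>i<length vs. vs ! i = v) \<longleftrightarrow> v \<in> range f" for v
    using set_vs by (metis in_set_conv_nth)
  show ?thesis
  proof (intro set_eqI iffI; clarify)
    fix a b
    assume "(a, b) \<in> weak_order_of (level_sets f)"
    then show "f a \<le> f b"
      unfolding in_weak_order_of_iff length using member index_le by metis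
  next
    fix a b
    assume "f a \<le> f b"
    moreover obtain i j where "i < length vs" "vs ! i = f a" "j < length vs" "vs ! j = f b"
      using index by blast
    ultimately show "(a, b) \<in> weak_order_of (level_sets f)"
      unfolding in_weak_order_of_iff length using member index_le by metis
  qed
qed

lemma pref_order_iff_card_better:
  fixes R :: "('a::finite \<times> 'a) set"
  assumes "pref_order R"
  shows "(a, b) \<in> R \<longleftrightarrow> card {c. (c, a) \<in> R \<and> (a, c) \<notin> R} \<le> card {c. (c, b) \<in> R \<and> (b, c) \<notin> R}"
proof -
  have refl: "(x, x) \<in> R" for x
    using assms by (simp add: pref_order_def refl_on_def)
  have trans: "(x, y) \<in> R \<Longrightarrow> (y, z) \<in> R \<Longrightarrow> (x, z) \<in> R" for x y z
    using assms by (simp add: pref_order_def) (meson transD)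
  have total: "(x, y) \<in> R \<or> (y, x) \<in> R" for x y
    using assms refl unfolding pref_order_def total_on_def by (cases "x = y") auto
  show ?thesis
  proof
    assume "(a, b) \<in> R"
    then have "{c. (c, a) \<in> R \<and> (a, c) \<notin> R} \<subseteq> {c. (c, b) \<in> R \<and> (b, c) \<notin> R}"
      using trans by blast
    then show "card {c. (c, a) \<in> R \<and> (a, c) \<notin> R} \<le> card {c. (c, b) \<in> R \<and> (b, c) \<notin> R}"
      by (intro card_mono) auto
  next
    assume le: "card {c. (c, a) \<in> R \<and> (a, c) \<notin> R} \<le> card {c. (c, b) \<in> R \<and> (b, c) \<notin> R}"
    show "(a, b) \<in> R"
    proof (rule ccontr)
      assume "(a, b) \<notin> R"
      then have "insert b {c. (c, b) \<in> R \<and> (b, c) \<notin> R} \<subseteq> {c. (c, a) \<in> R \<and> (a, c) \<notin> R}"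
        using total trans by blast
      then have "card (insert b {c. (c, b) \<in> R \<and> (b, c) \<notin> R}) \<le> card {c. (c, a) \<in> R \<and> (a, c) \<notin> R}"
        by (intro card_mono) auto
      then show False using le refl by simp
    qed
  qed
qed

lemma represents_level_sets_card_better:
  fixes R :: "('a::finite \<times> 'a) set"
  assumes "pref_order R"
  shows "represents R (level_sets (\<lambda>a. card {c. (c, a) \<in> R \<and> (a, c) \<notin> R}))"
  unfolding represents_iff weak_order_of_level_sets
proof (intro conjI set_eqI)
  fix p :: "'a \<times> 'a"
  obtain a b where p: "p = (a, b)" by (cases p)
  have "(a, b) \<in> R \<longleftrightarrow> (a, b) \<in> {(a, b). card {c. (c, a) \<in> R \<and> (a, c) \<notin> R} \<le> card {c. (c, b) \<in> R \<and> (b, c) \<notin> R}}"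
    unfolding mem_Collect_eq case_prod_conv by (rule pref_order_iff_card_better[OF assms])
  then show "p \<in> R \<longleftrightarrow> p \<in> {(a, b). card {c. (c, a) \<in> R \<and> (a, c) \<notin> R} \<le> card {c. (c, b) \<in> R \<and> (b, c) \<notin> R}}"
    unfolding p .
qed (rule ordered_partition_level_sets)

lemma ordered_partition_split_iff:
  "ordered_partition (xs @ [A, B] @ ys) \<longleftrightarrow>
     ordered_partition (xs @ [A \<union> B] @ ys) \<and> A \<inter> B = {} \<and> A \<noteq> {} \<and> B \<noteq> {}"
proof -
  have "sorted_wrt disjnt (xs @ [A, B] @ ys) \<longleftrightarrow> sorted_wrt disjnt (xs @ [A \<union> B] @ ys) \<and> disjnt A B"
    by (auto simp: sorted_wrt_append disjnt_Un1 disjnt_Un2)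
  moreover have "\<Union>(set (xs @ [A, B] @ ys)) = \<Union>(set (xs @ [A \<union> B] @ ys))" by auto
  ultimately show ?thesis
    by (auto simp: ordered_partition_def disjnt_def simp del: Union_Un_distrib)
qed

lemma separation_iff:
  "separation R R' Ms k A B \<longleftrightarrow>
     (\<exists>xs ys. Ms = xs @ [A \<union> B] @ ys \<and> length xs = k \<and> ordered_partition (xs @ [A, B] @ ys) \<and>
        R = weak_order_of Ms \<and> R' = weak_order_of (xs @ [A, B] @ ys))"
proof
  assume sep: "separation R R' Ms k A B"
  then have "Ms = take k Ms @ [A \<union> B] @ drop (Suc k) Ms" "length (take k Ms) = k"
    by (auto simp: separation_def id_take_nth_drop)
  with sep show "\<exists>xs ys. Ms = xs @ [A \<union> B] @ ys \<and> length xs = k \<and> ordered_partition (xs @ [A, B] @ ys) \<and>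
      R = weak_order_of Ms \<and> R' = weak_order_of (xs @ [A, B] @ ys)"
    unfolding separation_def represents_iff by blast
next
  assume "\<exists>xs ys. Ms = xs @ [A \<union> B] @ ys \<and> length xs = k \<and> ordered_partition (xs @ [A, B] @ ys) \<and>
      R = weak_order_of Ms \<and> R' = weak_order_of (xs @ [A, B] @ ys)"
  then obtain xs ys where Ms: "Ms = xs @ [A \<union> B] @ ys" and k: "length xs = k"
    and part: "ordered_partition (xs @ [A, B] @ ys)"
    and R: "R = weak_order_of Ms" and R': "R' = weak_order_of (xs @ [A, B] @ ys)"
    by blast
  have "ordered_partition Ms" "A \<inter> B = {}" "A \<noteq> {}" "B \<noteq> {}"
    using part unfolding Ms ordered_partition_split_iff by blast+
  then show "separation R R' Ms k A B"
    using part pref_order_weak_order_of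
    by (auto simp: separation_def represents_iff Ms R R' k[symmetric])
qed

lemma setprob_empty [simp]: "setprob x {} = 0"
  by (simp add: setprob_def)

lemma setprob_Un_disjoint:
  fixes x :: "'a::finite \<Rightarrow> real"
  shows "A \<inter> B = {} \<Longrightarrow> setprob x (A \<union> B) = setprob x A + setprob x B"
  by (simp add: setprob_def sum.union_disjoint)

lemma setprob_Union_sorted_disjnt:
  fixes x :: "'a::finite \<Rightarrow> real"
  shows "sorted_wrt disjnt Xs \<Longrightarrow> setprob x (\<Union>(set Xs)) = (\<Sum>X\<leftarrow>Xs. setprob x X)"
proof (induction Xs)
  case (Cons X Xs)
  then have "X \<inter> \<Union>(set Xs) = {}" by (auto simp: disjnt_def)
  with Cons show ?case by (simp add: setprob_Un_disjoint)
qed simp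

lemma lottery_setprob_UNIV: "lottery x \<Longrightarrow> setprob x UNIV = 1"
  by (simp add: lottery_def setprob_def)

lemma prefix_Union_Int_nth:
  assumes "sorted_wrt disjnt Ms" "i < length Ms"
  shows "\<Union>(set (take i Ms)) \<inter> Ms ! i = {}"
proof -
  have "sorted_wrt disjnt (take i Ms @ [Ms ! i])"
    using assms sorted_wrt_take[of disjnt Ms "Suc i"] by (simp add: take_Suc_conv_app_nth)
  then show ?thesis by (auto simp: sorted_wrt_append disjnt_def)
qed

lemma setprob_nth_eq_diff:
  fixes x :: "'a::finite \<Rightarrow> real"
  assumes "sorted_wrt disjnt Ms" "i < length Ms"
  shows "setprob x (Ms ! i) = setprob x (\<Union>(set (take (Suc i) Ms))) - setprob x (\<Union>(set (take i Ms)))"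
proof -
  have "\<Union>(set (take (Suc i) Ms)) = \<Union>(set (take i Ms)) \<union> Ms ! i"
    using assms(2) by (auto simp: take_Suc_conv_app_nth)
  then show ?thesis using setprob_Un_disjoint[OF prefix_Union_Int_nth[OF assms]] by simp
qed

lemma Union_take_split:
  "\<Union>(set (take n (xs @ [A \<union> B] @ ys))) =
     \<Union>(set (take (if n \<le> length xs then n else Suc n) (xs @ [A, B] @ ys)))"
proof (cases "n \<le> length xs")
  case False
  then obtain m where "n = length xs + Suc m"
    by (metis add_Suc_right less_imp_Suc_add not_le)
  then show ?thesis by auto
qed simp

section \<open>Necessity of the separation axioms\<close>

lemma strategyproof_upper_contour_eq:
  assumes "strategyproof \<phi>" "pref_order R" "pref_order R'"
    and "{b. (b, a) \<in> R} = U" "{b. (b, a') \<in> R'} = U"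
  shows "setprob (\<phi> R) U = setprob (\<phi> R') U"
proof -
  have "setprob (\<phi> R') U \<le> setprob (\<phi> R) U"
    using assms(1-4) unfolding strategyproof_def fosd_def by metis
  moreover have "setprob (\<phi> R) U \<le> setprob (\<phi> R') U"
    using assms(1-3,5) unfolding strategyproof_def fosd_def by metis
  ultimately show ?thesis by linarith
qed

lemma strategyproof_split_prefix_eq:
  fixes \<phi> :: "('a::finite \<times> 'a) set \<Rightarrow> 'a \<Rightarrow> real"
  assumes sp: "strategyproof \<phi>" and part: "ordered_partition (xs @ [A, B] @ ys)"
    and n: "n \<le> length (xs @ [A \<union> B] @ ys)"
  shows "setprob (\<phi> (weak_order_of (xs @ [A \<union> B] @ ys))) (\<Union>(set (take n (xs @ [A \<union> B] @ ys)))) =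
         setprob (\<phi> (weak_order_of (xs @ [A, B] @ ys))) (\<Union>(set (take n (xs @ [A \<union> B] @ ys))))"
proof (cases "n = 0")
  case False
  have coarse: "ordered_partition (xs @ [A \<union> B] @ ys)"
    using part ordered_partition_split_iff by blast
  obtain a where a: "{b. (b, a) \<in> weak_order_of (xs @ [A \<union> B] @ ys)} =
      \<Union>(set (take n (xs @ [A \<union> B] @ ys)))"
    using prefix_Union_upper_contour[OF coarse] n False by blast
  have "0 < (if n \<le> length xs then n else Suc n)"
    "(if n \<le> length xs then n else Suc n) \<le> length (xs @ [A, B] @ ys)"
    using n False by auto
  from prefix_Union_upper_contour[OF part this] obtain a' where
    "{b. (b, a') \<in> weak_order_of (xs @ [A, B] @ ys)} =
      \<Union>(set (take (if n \<le> length xs then n else Suc n) (xs @ [A, B] @ ys)))" .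
  then have a': "{b. (b, a') \<in> weak_order_of (xs @ [A, B] @ ys)} =
      \<Union>(set (take n (xs @ [A \<union> B] @ ys)))"
    by (simp only: Union_take_split)
  show ?thesis
    using strategyproof_upper_contour_eq[OF sp _ _ a a'] pref_order_weak_order_of coarse part
    by blast
qed simp

lemma strategyproof_split_nth_eq:
  fixes \<phi> :: "('a::finite \<times> 'a) set \<Rightarrow> 'a \<Rightarrow> real"
  assumes sp: "strategyproof \<phi>" and part: "ordered_partition (xs @ [A, B] @ ys)"
    and i: "i < length (xs @ [A \<union> B] @ ys)"
  shows "setprob (\<phi> (weak_order_of (xs @ [A \<union> B] @ ys))) ((xs @ [A \<union> B] @ ys) ! i) =
         setprob (\<phi> (weak_order_of (xs @ [A, B] @ ys))) ((xs @ [A \<union> B] @ ys) ! i)"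
proof -
  have "sorted_wrt disjnt (xs @ [A \<union> B] @ ys)"
    using part[unfolded ordered_partition_split_iff] by (simp add: ordered_partition_def)
  then show ?thesis
    using i strategyproof_split_prefix_eq[OF sp part, of i] strategyproof_split_prefix_eq[OF sp part, of "Suc i"]
    by (simp only: setprob_nth_eq_diff Suc_le_eq less_imp_le)
qed

lemma strategyproof_split_responsive:
  fixes \<phi> :: "('a::finite \<times> 'a) set \<Rightarrow> 'a \<Rightarrow> real"
  assumes sp: "strategyproof \<phi>" and part: "ordered_partition (xs @ [A, B] @ ys)"
  shows "setprob (\<phi> (weak_order_of (xs @ [A \<union> B] @ ys))) A \<le> setprob (\<phi> (weak_order_of (xs @ [A, B] @ ys))) A"
    and "setprob (\<phi> (weak_order_of (xs @ [A, B] @ ys))) B \<le> setprob (\<phi> (weak_order_of (xs @ [A \<union> B] @ ys))) B"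
proof -
  define R where "R = weak_order_of (xs @ [A \<union> B] @ ys)"
  define R' where "R' = weak_order_of (xs @ [A, B] @ ys)"
  have coarse: "ordered_partition (xs @ [A \<union> B] @ ys)" and AB: "A \<inter> B = {}" "A \<noteq> {}"
    using part[unfolded ordered_partition_split_iff] by simp_all
  have "\<forall>X\<in>set xs. disjnt X A"
    using part by (simp add: ordered_partition_def sorted_wrt_append)
  then have disj: "\<Union>(set xs) \<inter> A = {}" by (auto simp: disjnt_def)
  obtain a where "a \<in> A" using AB by blast
  then have "{b. (b, a) \<in> R'} = \<Union>(set xs) \<union> A"
    using upper_contour_weak_order_of[OF part, of "length xs" a] by (auto simp: R'_def)
  then have "setprob (\<phi> R) (\<Union>(set xs) \<union> A) \<le> setprob (\<phi> R') (\<Union>(set xs) \<union> A)"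
    using sp part coarse pref_order_weak_order_of unfolding strategyproof_def fosd_def R_def R'_def
    by metis
  moreover have "setprob (\<phi> R) (\<Union>(set xs)) = setprob (\<phi> R') (\<Union>(set xs))"
    using strategyproof_split_prefix_eq[OF sp part, of "length xs"] by (simp add: R_def R'_def)
  ultimately show A: "setprob (\<phi> R) A \<le> setprob (\<phi> R') A"
    by (simp add: setprob_Un_disjoint[OF disj])
  have "setprob (\<phi> R) (A \<union> B) = setprob (\<phi> R') (A \<union> B)"
    using strategyproof_split_nth_eq[OF sp part, of "length xs"] by (simp add: R_def R'_def)
  with A show "setprob (\<phi> R') B \<le> setprob (\<phi> R) B"
    by (simp add: setprob_Un_disjoint[OF AB(1)])
qed

lemma strategyproof_separation:
  fixes \<phi> :: "('a::finite \<times> 'a) set \<Rightarrow> 'a \<Rightarrow> real"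
  assumes sp: "strategyproof \<phi>" and sep: "separation R R' Ms k A B"
  shows "\<forall>i<length Ms. setprob (\<phi> R) (Ms ! i) = setprob (\<phi> R') (Ms ! i)"
    and "setprob (\<phi> R) A \<le> setprob (\<phi> R') A" "setprob (\<phi> R') B \<le> setprob (\<phi> R) B"
  using sep strategyproof_split_nth_eq[OF sp] strategyproof_split_responsive[OF sp]
  unfolding separation_iff by auto

lemma strategyproof_imp_separation_axioms:
  assumes "strategyproof \<phi>"
  shows "sep_monotonic \<phi> \<and> sep_upper_invariant \<phi> \<and> sep_lower_invariant \<phi>"
  using strategyproof_separation[OF assms]
  unfolding sep_monotonic_def sep_responsive_def sep_direct_def sep_upper_invariant_def
    sep_lower_invariant_def
  by (meson less_trans separation_def)

section \<open>Sufficiency of the separation axioms\<close>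

locale sep_responsive_invariant =
  fixes \<phi> :: "('a::finite \<times> 'a) set \<Rightarrow> 'a \<Rightarrow> real"
  assumes mechanism: "mechanism \<phi>" and responsive: "sep_responsive \<phi>"
    and upper_invariant: "sep_upper_invariant \<phi>" and lower_invariant: "sep_lower_invariant \<phi>"
begin

abbreviation prob :: "'a set list \<Rightarrow> 'a set \<Rightarrow> real" where
  "prob Ms V \<equiv> setprob (\<phi> (weak_order_of Ms)) V"

lemma prob_UNIV: "ordered_partition Ms \<Longrightarrow> prob Ms UNIV = 1"
  using mechanism pref_order_weak_order_of lottery_setprob_UNIV unfolding mechanism_def by blast

lemma prob_UNIV_eq_sum_blocks:
  assumes "ordered_partition Ms"
  shows "prob Ms' UNIV = (\<Sum>X\<leftarrow>Ms. prob Ms' X)"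
  using setprob_Union_sorted_disjnt[of Ms] assms by (simp add: ordered_partition_def)

lemma split_block_eq:
  assumes part: "ordered_partition (xs @ [A, B] @ ys)" and Z: "Z \<in> set (xs @ [A \<union> B] @ ys)"
  shows "prob (xs @ [A, B] @ ys) Z = prob (xs @ [A \<union> B] @ ys) Z"
proof -
  let ?coarse = "xs @ [A \<union> B] @ ys" and ?fine = "xs @ [A, B] @ ys"
  have coarse: "ordered_partition ?coarse"
    using part ordered_partition_split_iff by blast
  have sep: "separation (weak_order_of ?coarse) (weak_order_of ?fine) ?coarse (length xs) A B"
    unfolding separation_iff using part by blast
  have xs_eq: "prob ?fine X = prob ?coarse X" if "X \<in> set xs" for X
  proof -
    obtain i where "i < length xs" "xs ! i = X" using \<open>X \<in> set xs\<close> by (auto simp: in_set_conv_nth)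
    then show ?thesis
      using upper_invariant sep unfolding sep_upper_invariant_def by (fastforce simp: nth_append)
  qed
  have ys_eq: "prob ?fine Y = prob ?coarse Y" if "Y \<in> set ys" for Y
  proof -
    obtain i where i: "i < length ys" "ys ! i = Y" using \<open>Y \<in> set ys\<close> by (auto simp: in_set_conv_nth)
    have "?coarse ! (length xs + Suc i) = Y" "length xs < length xs + Suc i"
      "length xs + Suc i < length ?coarse"
      using i by (simp_all add: nth_append)
    then show ?thesis
      using lower_invariant sep unfolding sep_lower_invariant_def by metis
  qed
  have "(\<Sum>X\<leftarrow>?coarse. prob ?fine X) = (\<Sum>X\<leftarrow>?coarse. prob ?coarse X)"
    using prob_UNIV_eq_sum_blocks[OF coarse] prob_UNIV coarse part by simp
  moreover have "map (prob ?fine) xs = map (prob ?coarse) xs" "map (prob ?fine) ys = map (prob ?coarse) ys"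
    using xs_eq ys_eq by simp_all
  ultimately have "prob ?fine (A \<union> B) = prob ?coarse (A \<union> B)" by (simp del: map_eq_conv)
  then show ?thesis using Z xs_eq ys_eq by auto
qed

lemma split_responsive:
  assumes "ordered_partition (xs @ [A, B] @ ys)"
  shows "prob (xs @ [A \<union> B] @ ys) A \<le> prob (xs @ [A, B] @ ys) A"
proof -
  have "separation (weak_order_of (xs @ [A \<union> B] @ ys)) (weak_order_of (xs @ [A, B] @ ys))
      (xs @ [A \<union> B] @ ys) (length xs) A B"
    unfolding separation_iff using assms by blast
  then show ?thesis using responsive unfolding sep_responsive_def by blast
qed

lemma split_Union_eq:
  assumes "ordered_partition (xs @ [A, B] @ ys)"
    and "sorted_wrt disjnt Zs" "set Zs \<subseteq> set (xs @ [A \<union> B] @ ys)"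
  shows "prob (xs @ [A, B] @ ys) (\<Union>(set Zs)) = prob (xs @ [A \<union> B] @ ys) (\<Union>(set Zs))"
proof -
  have "map (prob (xs @ [A, B] @ ys)) Zs = map (prob (xs @ [A \<union> B] @ ys)) Zs"
    using split_block_eq[OF assms(1)] assms(3) by auto
  then show ?thesis
    unfolding setprob_Union_sorted_disjnt[OF assms(2)] by (rule arg_cong[where f = sum_list])
qed

text \<open>Filtering out the empty block keeps the report an ordered partition when V is empty or UNIV.\<close>

definition top_prob :: "'a set \<Rightarrow> real" where
  "top_prob V = prob (filter (\<lambda>X. X \<noteq> {}) [V, - V]) V"

lemma top_prob_empty [simp]: "top_prob {} = 0"
  by (simp add: top_prob_def)

lemma top_prob_UNIV [simp]: "top_prob UNIV = 1"
  using prob_UNIV[of "[UNIV]"] by (simp add: top_prob_def ordered_partition_def)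

lemma prob_merge_prefix:
  "ordered_partition (X # xs @ ys) \<Longrightarrow>
     prob (X # xs @ ys) (X \<union> \<Union>(set xs)) = prob ((X \<union> \<Union>(set xs)) # ys) (X \<union> \<Union>(set xs))"
proof (induction xs arbitrary: X)
  case (Cons X' xs)
  then have part: "ordered_partition ([] @ [X, X'] @ (xs @ ys))" by simp
  then have coarse: "ordered_partition ((X \<union> X') # xs @ ys)"
    using part[unfolded ordered_partition_split_iff] by simp
  then have sorted: "sorted_wrt disjnt ((X \<union> X') # xs)"
    by (simp add: ordered_partition_def sorted_wrt_append)
  have subset: "set ((X \<union> X') # xs) \<subseteq> set ([] @ [X \<union> X'] @ (xs @ ys))" by auto
  have "prob (X # X' # xs @ ys) (X \<union> X' \<union> \<Union>(set xs)) =
      prob ((X \<union> X') # xs @ ys) (X \<union> X' \<union> \<Union>(set xs))"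
    using split_Union_eq[OF part sorted subset] by (simp add: Un_assoc)
  with Cons.IH[OF coarse] show ?case by (simp add: Un_assoc)
qed simp

lemma prob_merge_suffix:
  "ordered_partition (xs @ Y # ys) \<Longrightarrow>
     prob (xs @ Y # ys) (\<Union>(set xs)) = prob (xs @ [Y \<union> \<Union>(set ys)]) (\<Union>(set xs))"
proof (induction ys arbitrary: Y)
  case (Cons Y' ys)
  then have part: "ordered_partition (xs @ [Y, Y'] @ ys)" by simp
  then have coarse: "ordered_partition (xs @ (Y \<union> Y') # ys)"
    using part[unfolded ordered_partition_split_iff] by simp
  have "sorted_wrt disjnt xs"
    using part by (simp add: ordered_partition_def sorted_wrt_append)
  moreover have "set xs \<subseteq> set (xs @ [Y \<union> Y'] @ ys)" by auto
  ultimately have "prob (xs @ Y # Y' # ys) (\<Union>(set xs)) = prob (xs @ (Y \<union> Y') # ys) (\<Union>(set xs))"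
    using split_Union_eq[OF part] by simp
  with Cons.IH[OF coarse] show ?case by (simp add: Un_assoc)
qed simp

lemma prob_prefix_eq_top_prob:
  assumes part: "ordered_partition (xs @ ys)"
  shows "prob (xs @ ys) (\<Union>(set xs)) = top_prob (\<Union>(set xs))"
proof (cases xs)
  case (Cons X xs')
  show ?thesis
  proof (cases ys)
    case Nil
    then show ?thesis using part prob_UNIV by (simp add: ordered_partition_def)
  next
    case (Cons Y ys')
    define U where "U = \<Union>(set xs)"
    have U: "U = X \<union> \<Union>(set xs')" by (simp add: U_def \<open>xs = X # xs'\<close>)
    have part': "ordered_partition (X # xs' @ ys)" using part \<open>xs = X # xs'\<close> by simp
    have "ordered_partition (U # ys)"
      using part' unfolding U ordered_partition_def by (auto simp: sorted_wrt_append)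
    then have "ordered_partition [U, Y \<union> \<Union>(set ys')]"
      using part' unfolding U ordered_partition_def \<open>ys = Y # ys'\<close> by (auto simp: sorted_wrt_append)
    then have two: "filter (\<lambda>X. X \<noteq> {}) [U, - U] = [U, Y \<union> \<Union>(set ys')]"
      by (rule filter_nonempty_pair)
    have "prob (xs @ ys) U = prob (U # Y # ys') U"
      using prob_merge_prefix[OF part'] by (simp add: U \<open>xs = X # xs'\<close> \<open>ys = Y # ys'\<close>)
    also have "\<dots> = prob [U, Y \<union> \<Union>(set ys')] U"
      using prob_merge_suffix[of "[U]" Y ys'] \<open>ordered_partition (U # ys)\<close> \<open>ys = Y # ys'\<close> by simp
    also have "\<dots> = top_prob U" by (simp only: top_prob_def two)
    finally show ?thesis by (simp add: U_def)
  qed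
qed simp

lemma prob_prefix_part_le_top_prob:
  assumes part: "ordered_partition (xs @ [X] @ ys)" and "V \<subseteq> X"
  shows "prob (xs @ [X] @ ys) (\<Union>(set xs) \<union> V) \<le> top_prob (\<Union>(set xs) \<union> V)"
proof -
  consider "V = {}" | "V = X" | "V \<noteq> {}" "V \<noteq> X" by blast
  then show ?thesis
  proof cases
    case 1
    then show ?thesis using prob_prefix_eq_top_prob[of xs "X # ys"] part by simp
  next
    case 2
    then show ?thesis using prob_prefix_eq_top_prob[of "xs @ [X]" ys] part by (simp add: Un_commute)
  next
    case 3
    define B where "B = X - V"
    have X: "X = V \<union> B" using \<open>V \<subseteq> X\<close> by (auto simp: B_def)
    have fine: "ordered_partition (xs @ [V, B] @ ys)"
      unfolding ordered_partition_split_iff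
    proof (intro conjI)
      show "ordered_partition (xs @ [V \<union> B] @ ys)" using part unfolding X .
    qed (use 3 \<open>V \<subseteq> X\<close> in \<open>auto simp: B_def\<close>)
    have "sorted_wrt disjnt xs" "\<forall>Y\<in>set xs. disjnt Y X"
      using part by (simp_all add: ordered_partition_def sorted_wrt_append)
    then have sorted: "sorted_wrt disjnt xs" and disj: "\<Union>(set xs) \<inter> V = {}"
      using \<open>V \<subseteq> X\<close> by (auto simp: disjnt_def)
    have "prob (xs @ [V \<union> B] @ ys) (\<Union>(set xs) \<union> V) =
        prob (xs @ [V \<union> B] @ ys) (\<Union>(set xs)) + prob (xs @ [V \<union> B] @ ys) V"
      by (rule setprob_Un_disjoint[OF disj])
    also have "\<dots> \<le> prob (xs @ [V, B] @ ys) (\<Union>(set xs)) + prob (xs @ [V, B] @ ys) V"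
      using split_Union_eq[OF fine sorted] split_responsive[OF fine] by (simp add: subset_insertI2)
    also have "\<dots> = prob (xs @ [V, B] @ ys) (\<Union>(set xs) \<union> V)"
      by (rule setprob_Un_disjoint[OF disj, symmetric])
    also have "\<dots> = top_prob (\<Union>(set xs) \<union> V)"
      using prob_prefix_eq_top_prob[of "xs @ [V]" "B # ys"] fine by (simp add: Un_commute)
    finally show ?thesis unfolding X .
  qed
qed

lemma top_prob_submodular: "top_prob (A \<union> B) + top_prob (A \<inter> B) \<le> top_prob A + top_prob B"
proof (cases "A \<subseteq> B \<or> B \<subseteq> A")
  case True
  then show ?thesis by (auto simp: Un_absorb1 Un_absorb2 Int_absorb1 Int_absorb2)
next
  case False
  define S X Z where "S = A \<inter> B" and "X = A - B" and "Z = B - A"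
  define ss rs where "ss = filter (\<lambda>Y. Y \<noteq> {}) [S]" and "rs = filter (\<lambda>Y. Y \<noteq> {}) [- (S \<union> X \<union> Z)]"
  have disj: "S \<inter> X = {}" "S \<inter> Z = {}" "X \<inter> Z = {}" "Z \<inter> X = {}" "(S \<union> X) \<inter> Z = {}"
    and XZ: "X \<noteq> {}" "Z \<noteq> {}"
    using False by (auto simp: S_def X_def Z_def)
  have part1: "ordered_partition (ss @ [X, Z] @ rs)"
    unfolding ss_def rs_def using ordered_partition_three_blocks disj XZ by blast
  have part2: "ordered_partition (ss @ [Z, X] @ rs)"
    unfolding ss_def rs_def using ordered_partition_three_blocks[of S Z X] disj XZ
    by (simp add: Un_ac)
  have ss: "\<Union>(set ss) = S" by (auto simp: ss_def)
  have A: "A = S \<union> X" and B: "B = S \<union> Z" and AB: "A \<union> B = S \<union> X \<union> Z" and S: "A \<inter> B = S"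
    by (auto simp: S_def X_def Z_def)
  let ?coarse = "ss @ [X \<union> Z] @ rs" and ?fine1 = "ss @ [X, Z] @ rs" and ?fine2 = "ss @ [Z, X] @ rs"
  have top_AB: "top_prob (A \<union> B) = prob ?fine1 (S \<union> X \<union> Z)"
    using prob_prefix_eq_top_prob[of "ss @ [X, Z]" rs] part1 by (simp add: ss AB Un_ac)
  have top_A: "top_prob A = prob ?fine1 (S \<union> X)"
    using prob_prefix_eq_top_prob[of "ss @ [X]" "Z # rs"] part1 by (simp add: ss A Un_ac)
  have top_S: "top_prob (A \<inter> B) = prob ?fine2 S"
    using prob_prefix_eq_top_prob[of ss "Z # X # rs"] part2 by (simp add: ss S)
  have top_B: "top_prob B = prob ?fine2 (S \<union> Z)"
    using prob_prefix_eq_top_prob[of "ss @ [Z]" "X # rs"] part2 by (simp add: ss B Un_ac)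
  have "prob ?fine1 (X \<union> Z) = prob ?coarse (X \<union> Z)"
    using split_block_eq[OF part1] by simp
  moreover have "prob ?coarse X \<le> prob ?fine1 X"
    using split_responsive[OF part1] .
  moreover have "prob ?coarse Z \<le> prob ?fine2 Z"
    using split_responsive[OF part2] by (simp add: Un_commute)
  ultimately show ?thesis
    using top_AB top_A top_S top_B disj by (simp add: setprob_Un_disjoint)
qed

lemma prob_le_top_prob:
  assumes part: "ordered_partition Ms"
  shows "prob Ms V \<le> top_prob V"
proof -
  define W where "W j = \<Union>(set (take j Ms))" for j
  define h where "h j = top_prob (V \<inter> W j)" for j
  have sorted: "sorted_wrt disjnt Ms" using part by (simp add: ordered_partition_def)
  have step: "prob Ms (V \<inter> Ms ! j) \<le> h (Suc j) - h j" if j: "j < length Ms" for j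
  proof -
    have Ms: "take j Ms @ [Ms ! j] @ drop (Suc j) Ms = Ms" using j by (simp add: id_take_nth_drop[symmetric])
    have disj: "W j \<inter> Ms ! j = {}" unfolding W_def by (rule prefix_Union_Int_nth[OF sorted j])
    have W_Suc: "W (Suc j) = W j \<union> Ms ! j" using j by (auto simp: W_def take_Suc_conv_app_nth)
    have "prob Ms (W j \<union> (V \<inter> Ms ! j)) \<le> top_prob (W j \<union> (V \<inter> Ms ! j))"
      using prob_prefix_part_le_top_prob[of "take j Ms" "Ms ! j" "drop (Suc j) Ms" "V \<inter> Ms ! j"] part
      unfolding Ms W_def by simp
    moreover have "prob Ms (W j) = top_prob (W j)"
      using prob_prefix_eq_top_prob[of "take j Ms" "drop j Ms"] part by (simp add: W_def)
    moreover have "prob Ms (W j \<union> (V \<inter> Ms ! j)) = prob Ms (W j) + prob Ms (V \<inter> Ms ! j)"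
      using disj by (intro setprob_Un_disjoint) blast
    moreover have "top_prob (W j \<union> (V \<inter> Ms ! j)) + h j \<le> top_prob (W j) + h (Suc j)"
    proof -
      have "W j \<union> V \<inter> W (Suc j) = W j \<union> (V \<inter> Ms ! j)" "W j \<inter> (V \<inter> W (Suc j)) = V \<inter> W j"
        unfolding W_Suc by blast+
      then show ?thesis
        using top_prob_submodular[of "W j" "V \<inter> W (Suc j)"] unfolding h_def by simp
    qed
    ultimately show ?thesis by linarith
  qed
  have "sorted_wrt disjnt (map ((\<inter>) V) Ms)"
    unfolding sorted_wrt_map by (rule sorted_wrt_mono_rel[OF _ sorted]) (auto simp: disjnt_def)
  moreover have "\<Union>(set (map ((\<inter>) V) Ms)) = V"
    using part by (auto simp: ordered_partition_def)
  ultimately have "prob Ms V = (\<Sum>Y\<leftarrow>map ((\<inter>) V) Ms. prob Ms Y)"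
    using setprob_Union_sorted_disjnt by metis
  also have "\<dots> = (\<Sum>j<length Ms. prob Ms (V \<inter> Ms ! j))"
    by (simp add: sum_list_sum_nth atLeast0LessThan)
  also have "\<dots> \<le> (\<Sum>j<length Ms. h (Suc j) - h j)"
    by (rule sum_mono) (simp add: step)
  also have "\<dots> = h (length Ms) - h 0"
    by (rule sum_lessThan_telescope)
  also have "\<dots> = top_prob V"
    using part by (simp add: h_def W_def ordered_partition_def)
  finally show ?thesis .
qed

theorem strategyproof: "strategyproof \<phi>"
  unfolding strategyproof_def fosd_def
proof (intro allI impI)
  fix R R' :: "('a \<times> 'a) set" and a :: 'a
  assume "pref_order R \<and> pref_order R'"
  then obtain Ms Ms' where "represents R Ms" "represents R' Ms'"
    using represents_level_sets_card_better by blast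
  then have part: "ordered_partition Ms" "ordered_partition Ms'"
    and R: "R = weak_order_of Ms" and R': "R' = weak_order_of Ms'"
    unfolding represents_iff by blast+
  obtain i where "i < length Ms" "a \<in> Ms ! i" using ordered_partition_cover[OF part(1)] .
  then have U: "{b. (b, a) \<in> R} = \<Union>(set (take (Suc i) Ms))"
    unfolding R by (rule upper_contour_weak_order_of[OF part(1)])
  have "prob Ms (\<Union>(set (take (Suc i) Ms))) = top_prob (\<Union>(set (take (Suc i) Ms)))"
    using prob_prefix_eq_top_prob[of "take (Suc i) Ms" "drop (Suc i) Ms"] part(1) by simp
  moreover have "prob Ms' (\<Union>(set (take (Suc i) Ms))) \<le> top_prob (\<Union>(set (take (Suc i) Ms)))"
    by (rule prob_le_top_prob[OF part(2)])
  ultimately show "setprob (\<phi> R') {b. (b, a) \<in> R} \<le> setprob (\<phi> R) {b. (b, a) \<in> R}"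
    unfolding U by (simp add: R R')
qed

end

theorem theorem1:
  fixes \<phi> :: "('a::finite \<times> 'a) set \<Rightarrow> 'a \<Rightarrow> real"
  assumes "mechanism \<phi>"
  shows "strategyproof \<phi> \<longleftrightarrow>
           sep_monotonic \<phi> \<and> sep_upper_invariant \<phi> \<and> sep_lower_invariant \<phi>"
proof
  assume "sep_monotonic \<phi> \<and> sep_upper_invariant \<phi> \<and> sep_lower_invariant \<phi>"
  then interpret sep_responsive_invariant \<phi>
    using assms by unfold_locales (simp_all add: sep_monotonic_def)
  show "strategyproof \<phi>" by (rule strategyproof)
qed (rule strategyproof_imp_separation_axioms)

end
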